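(* Let $\alpha>0$, $0<p<1$, $\beta_1,\beta_2,\beta_3>0$, let $V_1,V_2,V_3$ be independent with $V_i\sim EDW(\alpha,p,\beta_i)$, and let $X_1=\max\{V_1,V_3\}$, $X_2=\max\{V_2,V_3\}$. Then $X_1$ and $X_2$ are positive quadrant dependent, i.e. $P(X_1\le x_1,X_2\le x_2)\ge P(X_1\le x_1)P(X_2\le x_2)$ for all $x_1,x_2$.
   Context: The exponentiated discrete Weibull distribution $EDW(\alpha,p,\beta)$ ($\alpha,\beta>0$, $0<p<1$) is the distribution on $\mathbb{N}_0=\{0,1,2,\dots\}$ with cumulative distribution function $F_{EDW}(x;\alpha,p,\beta)=[1-p^{([x]+1)^{\alpha}}]^{\beta}$ for real $x\ge 0$, where $[x]$ is the largest integer $\le x$. *)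

theory Defs
  imports "HOL-Probability.Probability"
begin

definition edw_cdf :: "real \<Rightarrow> real \<Rightarrow> real \<Rightarrow> real \<Rightarrow> real" where
  "edw_cdf \<alpha> p \<beta> x =
     (if x < 0 then 0
      else (1 - p powr ((real_of_int \<lfloor>x\<rfloor> + 1) powr \<alpha>)) powr \<beta>)"

definition has_edw_distribution ::
  "'a measure \<Rightarrow> ('a \<Rightarrow> nat) \<Rightarrow> real \<Rightarrow> real \<Rightarrow> real \<Rightarrow> bool" where
  "has_edw_distribution M V \<alpha> p \<beta> \<longleftrightarrow>
     V \<in> measurable M (count_space UNIV) \<and>
     (\<forall>x::real. measure M {\<omega> \<in> space M. real (V \<omega>) \<le> x} = edw_cdf \<alpha> p \<beta> x)"

end

theory Submission
  imports Defs
begin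

text \<open>With \<open>A\<^sub>x = {n. n \<le> x}\<close>, both
  events \<open>X\<^sub>1 \<le> x\<^sub>1\<close> and \<open>X\<^sub>2 \<le> x\<^sub>2\<close> factor over the independent components, and they
  interact only through the shared \<open>V\<^sub>3\<close>. As the sets \<open>A\<^sub>x\<close> are nested,
  \<open>P(V\<^sub>3 \<in> A\<^sub>x\<^sub>1 \<inter> A\<^sub>x\<^sub>2)\<close> is the smaller of \<open>P(V\<^sub>3 \<in> A\<^sub>x\<^sub>1)\<close> and
  \<open>P(V\<^sub>3 \<in> A\<^sub>x\<^sub>2)\<close>, hence at least their product.\<close>

lemma (in prob_space) prob_mult_le_prob_Int_if_nested:
  assumes "A \<subseteq> B \<or> B \<subseteq> A"
  shows "prob A * prob B \<le> prob (A \<inter> B)"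
proof -
  have "prob A * prob B \<le> prob A" "prob A * prob B \<le> prob B"
    by (simp_all add: mult_left_le mult_left_le_one_le)
  with assms show ?thesis
    by (auto simp: Int_absorb1 Int_absorb2)
qed

lemma (in prob_space) common_component_PQD:
  fixes X :: "'i \<Rightarrow> 'a \<Rightarrow> 'b"
  assumes indep: "indep_vars (\<lambda>_. count_space UNIV) X {i, j, k}"
    and distinct: "i \<noteq> j" "i \<noteq> k" "j \<noteq> k"
    and nested: "A \<subseteq> B \<or> B \<subseteq> A"
  shows "prob {\<omega> \<in> space M. X i \<omega> \<in> A \<and> X k \<omega> \<in> A}
           * prob {\<omega> \<in> space M. X j \<omega> \<in> B \<and> X k \<omega> \<in> B}
         \<le> prob {\<omega> \<in> space M. (X i \<omega> \<in> A \<and> X k \<omega> \<in> A) \<and> (X j \<omega> \<in> B \<and> X k \<omega> \<in> B)}"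
proof -
  define P where "P l C = prob (X l -` C \<inter> space M)" for l C
  have factor: "prob (\<Inter>l\<in>J. X l -` C l \<inter> space M) = (\<Prod>l\<in>J. P l (C l))"
    if "J \<subseteq> {i, j, k}" "J \<noteq> {}" for J C
  proof -
    have "finite J"
      using that(1) by (rule finite_subset) simp
    with indep_varsD[OF indep that(2) _ that(1)] show ?thesis
      unfolding P_def by simp
  qed
  have left: "prob {\<omega> \<in> space M. X l \<omega> \<in> C \<and> X k \<omega> \<in> C} = P l C * P k C"
    if "l \<in> {i, j}" for l C
  proof -
    have "{\<omega> \<in> space M. X l \<omega> \<in> C \<and> X k \<omega> \<in> C} = (\<Inter>m\<in>{l, k}. X m -` C \<inter> space M)"
      by auto
    with factor[of "{l, k}" "\<lambda>_. C"] that distinct show ?thesis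
      by auto
  qed
  define C where "C l = (if l = i then A else if l = j then B else A \<inter> B)" for l
  have "{\<omega> \<in> space M. (X i \<omega> \<in> A \<and> X k \<omega> \<in> A) \<and> (X j \<omega> \<in> B \<and> X k \<omega> \<in> B)}
      = (\<Inter>l\<in>{i, j, k}. X l -` C l \<inter> space M)"
    using distinct by (auto simp: C_def)
  then have joint: "prob {\<omega> \<in> space M. (X i \<omega> \<in> A \<and> X k \<omega> \<in> A) \<and> (X j \<omega> \<in> B \<and> X k \<omega> \<in> B)}
      = P i A * P j B * P k (A \<inter> B)"
    using factor[of "{i, j, k}" C] distinct by (simp add: C_def)
  have "X k -` A \<inter> space M \<subseteq> X k -` B \<inter> space M \<or> X k -` B \<inter> space M \<subseteq> X k -` A \<inter> space M"
    using nested by blast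
  from prob_mult_le_prob_Int_if_nested[OF this]
  have "P k A * P k B \<le> P k (A \<inter> B)"
    unfolding P_def by (metis Int_assoc Int_left_commute Int_absorb vimage_Int)
  then have "P i A * P j B * (P k A * P k B) \<le> P i A * P j B * P k (A \<inter> B)"
    by (intro mult_left_mono) (auto simp: P_def)
  then show ?thesis
    using left[of i A] left[of j B] joint by (simp add: algebra_simps)
qed

theorem mainTheorem5:
  fixes M :: "'a measure" and V :: "nat \<Rightarrow> 'a \<Rightarrow> nat"
    and \<alpha> p :: real and \<beta> :: "nat \<Rightarrow> real"
  assumes "prob_space M"
    and "\<alpha> > 0" and "0 < p" and "p < 1"
    and "\<And>i. i \<in> {1,2,3} \<Longrightarrow> \<beta> i > 0"
    and "\<And>i. i \<in> {1,2,3} \<Longrightarrow> has_edw_distribution M (V i) \<alpha> p (\<beta> i)"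
    and "prob_space.indep_vars M (\<lambda>_. count_space UNIV) V {1,2,3}"
  shows "\<forall>x1 x2 :: real.
     measure M {\<omega> \<in> space M. real (max (V 1 \<omega>) (V 3 \<omega>)) \<le> x1 \<and>
                               real (max (V 2 \<omega>) (V 3 \<omega>)) \<le> x2}
     \<ge> measure M {\<omega> \<in> space M. real (max (V 1 \<omega>) (V 3 \<omega>)) \<le> x1}
       * measure M {\<omega> \<in> space M. real (max (V 2 \<omega>) (V 3 \<omega>)) \<le> x2}"
proof (intro allI)
  fix x1 x2 :: real
  interpret prob_space M by fact
  define A where "A x = {n :: nat. real n \<le> x}" for x
  have "A x1 \<subseteq> A x2 \<or> A x2 \<subseteq> A x1"
    by (cases "x1 \<le> x2") (auto simp: A_def)
  from common_component_PQD[OF assms(7) _ _ _ this]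
  show "measure M {\<omega> \<in> space M. real (max (V 1 \<omega>) (V 3 \<omega>)) \<le> x1 \<and>
                               real (max (V 2 \<omega>) (V 3 \<omega>)) \<le> x2}
     \<ge> measure M {\<omega> \<in> space M. real (max (V 1 \<omega>) (V 3 \<omega>)) \<le> x1}
       * measure M {\<omega> \<in> space M. real (max (V 2 \<omega>) (V 3 \<omega>)) \<le> x2}"
    by (simp add: A_def of_nat_max)
qed

end
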